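(* Let $G$ be a simple graph on $[n]$ with connected components $G_1,\dots,G_c$, and for each $i$ let $T_i$ be a fundamental independent set of $G_i$. Then $T=T_1\cup\cdots\cup T_c$ is a fundamental independent set of the cone graph $G^*$.
   Context: The cone graph $G^*$ has vertex set $[n+1]$ and edge set $E(G)\cup\{\{i,n+1\}: i\in[n]\}$. For a graph $H$ and $U\subseteq V(H)$, $N_H(U)$ is the set of vertices adjacent to some vertex of $U$. For an independent set $T$ of $H$, $B_H(T)$ is the bipartite graph with vertex set $T\cup N_H(T)$ and edge set $\{\{v,w\}: v\in T, w\in N_H(T), \{v,w\}\in E(H)\}$. An independent set $T$ of $H$ is fundamental in $H$ if (1) $B_H(T)$ is connected, and (2) if $T\cup N_H(T)\neq V(H)$, then every connected component of the induced subgraph $H\setminus V(B_H(T))$ on $V(H)\setminus (T\cup N_H(T))$ contains an odd cycle. Convention: the graph with empty vertex set is regarded as connected (so $T=\emptyset$ is fundamental in $H$ exactly when every connected component of $H$ contains an odd cycle). *)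

theory Defs
  imports Main
begin

text \<open>A graph is a pair (vertex set, edge set); edges are 2-element sets of vertices.\<close>
type_synonym graph = "nat set \<times> nat set set"

definition simple_graph_on :: "nat \<Rightarrow> nat set set \<Rightarrow> bool" where
  "simple_graph_on n E \<longleftrightarrow>
     (\<forall>e\<in>E. \<exists>u v. u \<noteq> v \<and> e = {u, v} \<and> u \<in> {1..n} \<and> v \<in> {1..n})"

definition cone :: "nat \<Rightarrow> nat set set \<Rightarrow> graph" where
  "cone n E = ({1..n+1}, E \<union> {{i, n+1} | i. i \<in> {1..n}})"

definition nbhd :: "graph \<Rightarrow> nat set \<Rightarrow> nat set" where
  "nbhd H U = {w \<in> fst H. \<exists>u\<in>U. {u, w} \<in> snd H}"

definition independent :: "graph \<Rightarrow> nat set \<Rightarrow> bool" where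
  "independent H T \<longleftrightarrow> T \<subseteq> fst H \<and> (\<forall>u\<in>T. \<forall>v\<in>T. {u, v} \<notin> snd H)"

definition bip :: "graph \<Rightarrow> nat set \<Rightarrow> graph" where
  "bip H T = (T \<union> nbhd H T,
              {e \<in> snd H. \<exists>v\<in>T. \<exists>w\<in>nbhd H T. e = {v, w}})"

definition induced :: "graph \<Rightarrow> nat set \<Rightarrow> graph" where
  "induced H S = (S, {e \<in> snd H. e \<subseteq> S})"

definition reach :: "graph \<Rightarrow> nat \<Rightarrow> nat \<Rightarrow> bool" where
  "reach H = (\<lambda>x y. {x, y} \<in> snd H \<and> x \<in> fst H \<and> y \<in> fst H)\<^sup>*\<^sup>*"

text \<open>Connectedness; the empty graph is connected (vacuously).\<close>
definition connected_graph :: "graph \<Rightarrow> bool" where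
  "connected_graph H \<longleftrightarrow> (\<forall>u\<in>fst H. \<forall>v\<in>fst H. reach H u v)"

definition components :: "graph \<Rightarrow> nat set set" where
  "components H = {{v \<in> fst H. reach H u v} | u. u \<in> fst H}"

definition has_odd_cycle :: "graph \<Rightarrow> bool" where
  "has_odd_cycle H \<longleftrightarrow> (\<exists>cs. distinct cs \<and> length cs \<ge> 3 \<and> odd (length cs) \<and>
      set cs \<subseteq> fst H \<and>
      (\<forall>i<length cs. {cs ! i, cs ! ((i + 1) mod length cs)} \<in> snd H))"

definition fundamental :: "graph \<Rightarrow> nat set \<Rightarrow> bool" where
  "fundamental H T \<longleftrightarrow> independent H T \<and> connected_graph (bip H T) \<and>
     (T \<union> nbhd H T \<noteq> fst H \<longrightarrow>
        (\<forall>C \<in> components (induced H (fst H - (T \<union> nbhd H T))).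
            has_odd_cycle (induced H C)))"

end

theory Submission
  imports Defs
begin

text \<open>
  The apex \<open>n + 1\<close> of the cone is adjacent to every vertex of \<open>G\<close>. If \<open>T\<close> is nonempty,
  the apex lies in \<open>N(T)\<close>, so \<open>B(T)\<close> is connected through it, and the vertices of \<open>G\<^sup>*\<close>
  outside \<open>T \<union> N(T)\<close> are those of \<open>G\<close> outside \<open>T \<union> N(T)\<close>. The graph they induce splits along
  the components of \<open>G\<close>, and on the component \<open>C\<close> it is the part of \<open>C\<close> outside
  \<open>T\<^sub>C \<union> N(T\<^sub>C)\<close>, whose components contain odd cycles by hypothesis. If \<open>T\<close> is empty,
  the hypothesis gives an odd cycle in \<open>G\<close>, and \<open>G\<^sup>*\<close> is connected, so its only
  component, \<open>G\<^sup>*\<close> itself, contains one.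
\<close>

definition adjacent :: "graph \<Rightarrow> nat \<Rightarrow> nat \<Rightarrow> bool" where
  "adjacent H x y \<longleftrightarrow> {x, y} \<in> snd H \<and> x \<in> fst H \<and> y \<in> fst H"

lemma reach_eq_rtranclp_adjacent: "reach H = (adjacent H)\<^sup>*\<^sup>*"
  by (simp add: reach_def adjacent_def [abs_def])

lemma reach_refl [simp]: "reach H x x"
  by (simp add: reach_eq_rtranclp_adjacent)

lemma reach_step: "reach H x y \<Longrightarrow> adjacent H y z \<Longrightarrow> reach H x z"
  by (simp add: reach_eq_rtranclp_adjacent)

lemma reach_trans: "reach H x y \<Longrightarrow> reach H y z \<Longrightarrow> reach H x z"
  by (simp add: reach_eq_rtranclp_adjacent)

lemma adjacent_sym: "adjacent H x y \<Longrightarrow> adjacent H y x"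
  by (auto simp: adjacent_def insert_commute)

lemma reach_sym: "reach H x y \<Longrightarrow> reach H y x"
  unfolding reach_eq_rtranclp_adjacent
  by (metis adjacent_sym symp_rtranclp sympD sympI)

lemma reach_mono:
  "(\<And>x y. adjacent X x y \<Longrightarrow> adjacent Y x y) \<Longrightarrow> reach X u v \<Longrightarrow> reach Y u v"
  unfolding reach_eq_rtranclp_adjacent by (metis mono_rtranclp)

lemma reach_closed_transfer:
  assumes "reach X u v" "u \<in> S"
    and "\<And>x y. x \<in> S \<Longrightarrow> adjacent X x y \<Longrightarrow> y \<in> S \<and> adjacent Y x y"
  shows "v \<in> S \<and> reach Y u v"
  using assms(1) unfolding reach_eq_rtranclp_adjacent
proof (induction rule: rtranclp_induct)
  case base
  show ?case using assms(2) by simp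
next
  case (step y z)
  then show ?case using assms(3) by (meson rtranclp.rtrancl_into_rtrancl)
qed

lemma fst_induced [simp]: "fst (induced H S) = S"
  and snd_induced [simp]: "snd (induced H S) = {e \<in> snd H. e \<subseteq> S}"
  by (simp_all add: induced_def)

lemma adjacent_induced [simp]:
  "adjacent (induced H S) x y \<longleftrightarrow> {x, y} \<in> snd H \<and> x \<in> S \<and> y \<in> S"
  by (auto simp: adjacent_def induced_def)

lemma induced_induced: "K \<subseteq> C \<Longrightarrow> induced (induced H C) K = induced H K"
  by (auto simp: induced_def)

lemma reach_induced_vertices: "reach (induced H (fst H)) = reach H"
  by (auto simp: reach_eq_rtranclp_adjacent adjacent_def [abs_def] induced_def)

lemma connected_graphI_hub:
  "(\<And>x. x \<in> fst H \<Longrightarrow> reach H x a) \<Longrightarrow> connected_graph H"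
  unfolding connected_graph_def by (blast intro: reach_trans reach_sym)

lemma component_of_in_components:
  "u \<in> fst H \<Longrightarrow> {v \<in> fst H. reach H u v} \<in> components H"
  by (auto simp: components_def)

lemma components_subset: "C \<in> components H \<Longrightarrow> C \<subseteq> fst H"
  by (auto simp: components_def)

lemma component_reach_closed:
  assumes "C \<in> components H" "x \<in> C" "reach H x y" "y \<in> fst H"
  shows "y \<in> C"
  using assms by (auto simp: components_def intro: reach_trans)

lemma components_eq:
  assumes "C \<in> components H" "C' \<in> components H" "x \<in> C" "x \<in> C'"
  shows "C = C'"
proof -
  have "C \<subseteq> C'" if "C \<in> components H" "C' \<in> components H" "x \<in> C" "x \<in> C'" for C C'
  proof
    fix v assume "v \<in> C"
    from that(1) obtain u where C: "C = {v \<in> fst H. reach H u v}"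
      by (auto simp: components_def)
    have "reach H x v" using C \<open>v \<in> C\<close> \<open>x \<in> C\<close> by (blast intro: reach_trans reach_sym)
    then show "v \<in> C'" using that C \<open>v \<in> C\<close> component_reach_closed by blast
  qed
  then show ?thesis using assms by blast
qed

lemma components_connected_graph:
  "connected_graph H \<Longrightarrow> K \<in> components H \<Longrightarrow> K = fst H"
  by (auto simp: components_def connected_graph_def)

lemma component_induced_Int_component:
  assumes C: "C \<in> components H" and S: "S \<subseteq> fst H" and u: "u \<in> S \<inter> C"
  shows "{v \<in> S. reach (induced H S) u v} = {v \<in> S \<inter> C. reach (induced H (S \<inter> C)) u v}"
proof -
  have "v \<in> S \<inter> C \<and> reach (induced H (S \<inter> C)) u v" if "reach (induced H S) u v" for v
  proof (rule reach_closed_transfer[OF that u])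
    fix x y assume x: "x \<in> S \<inter> C" and xy: "adjacent (induced H S) x y"
    then have "adjacent H x y" using S by (auto simp: adjacent_def induced_def)
    then have "y \<in> C"
      using component_reach_closed[OF C _ reach_step[OF reach_refl]] x by (auto simp: adjacent_def)
    then show "y \<in> S \<inter> C \<and> adjacent (induced H (S \<inter> C)) x y" using x xy by simp
  qed
  moreover have "reach (induced H S) u v" if "reach (induced H (S \<inter> C)) u v" for v
    by (rule reach_mono[OF _ that]) auto
  ultimately show ?thesis by blast
qed

lemma has_odd_cycle_induced_vertices:
  assumes "has_odd_cycle H"
  shows "has_odd_cycle (induced H (fst H))"
proof -
  obtain cs where cs: "distinct cs" "length cs \<ge> 3" "odd (length cs)" "set cs \<subseteq> fst H"
    and edges: "\<forall>i<length cs. {cs ! i, cs ! ((i + 1) mod length cs)} \<in> snd H"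
    using assms unfolding has_odd_cycle_def by blast
  have "{cs ! i, cs ! ((i + 1) mod length cs)} \<subseteq> fst H" if "i < length cs" for i
  proof -
    have "(i + 1) mod length cs < length cs" using that by (intro mod_less_divisor) linarith
    then show ?thesis using cs(4) that nth_mem by blast
  qed
  then show ?thesis
    using cs edges unfolding has_odd_cycle_def by (intro exI[of _ cs]) auto
qed

lemma has_odd_cycle_mono:
  assumes "has_odd_cycle H" "fst H \<subseteq> fst H'" "snd H \<subseteq> snd H'"
  shows "has_odd_cycle H'"
  using assms unfolding has_odd_cycle_def by blast

definition odd_outside :: "graph \<Rightarrow> nat set \<Rightarrow> bool" where
  "odd_outside H T \<longleftrightarrow> (T \<union> nbhd H T \<noteq> fst H \<longrightarrow>
     (\<forall>K \<in> components (induced H (fst H - (T \<union> nbhd H T))). has_odd_cycle (induced H K)))"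

lemma nbhd_subset: "nbhd H T \<subseteq> fst H"
  by (auto simp: nbhd_def)

lemma fundamental_iff:
  "fundamental H T \<longleftrightarrow> independent H T \<and> connected_graph (bip H T) \<and> odd_outside H T"
  by (simp add: fundamental_def odd_outside_def)

lemma odd_outside_empty_imp_has_odd_cycle:
  assumes "odd_outside H {}" "u \<in> fst H"
  shows "has_odd_cycle H"
proof -
  have nbhd_empty: "nbhd H {} = {}" by (simp add: nbhd_def)
  have "{v \<in> fst H. reach H u v} \<in> components (induced H (fst H))"
    using component_of_in_components[of u "induced H (fst H)"] assms(2)
    by (simp add: reach_induced_vertices)
  then have "has_odd_cycle (induced H {v \<in> fst H. reach H u v})"
    using assms unfolding odd_outside_def nbhd_empty by auto
  then show ?thesis by (rule has_odd_cycle_mono) auto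
qed

context
  fixes G :: graph and Tf :: "nat set \<Rightarrow> nat set"
  assumes Tf_subset: "\<And>C. C \<in> components G \<Longrightarrow> Tf C \<subseteq> C"
begin

lemma Union_components_Int:
  assumes "C \<in> components G"
  shows "(\<Union>C' \<in> components G. Tf C') \<inter> C = Tf C"
  using assms Tf_subset components_eq by blast

lemma nbhd_Union_components_Int:
  assumes C: "C \<in> components G"
  shows "nbhd G (\<Union>C' \<in> components G. Tf C') \<inter> C = nbhd (induced G C) (Tf C)"
proof (intro equalityI subsetI)
  fix v assume "v \<in> nbhd G (\<Union>C' \<in> components G. Tf C') \<inter> C"
  then obtain C' t where v: "v \<in> C" "v \<in> fst G" and C': "C' \<in> components G" "t \<in> Tf C'"
    and tv: "{t, v} \<in> snd G"
    by (auto simp: nbhd_def)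
  have "t \<in> C'" using C' Tf_subset by blast
  moreover have "adjacent G t v"
    using \<open>t \<in> C'\<close> components_subset[OF C'(1)] v tv by (auto simp: adjacent_def)
  ultimately have "v \<in> C'" using C' v component_reach_closed reach_step[OF reach_refl] by blast
  then have "C' = C" using components_eq C C' v by blast
  then show "v \<in> nbhd (induced G C) (Tf C)"
    using C' Tf_subset v tv by (auto simp: nbhd_def induced_def)
next
  fix v assume "v \<in> nbhd (induced G C) (Tf C)"
  then show "v \<in> nbhd G (\<Union>C' \<in> components G. Tf C') \<inter> C"
    using C components_subset[OF C] by (auto simp: nbhd_def)
qed

lemma independent_Union_components:
  assumes indep: "\<And>C. C \<in> components G \<Longrightarrow> independent (induced G C) (Tf C)"
  shows "independent G (\<Union>C \<in> components G. Tf C)"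
  unfolding independent_def
proof (intro conjI ballI)
  show T_subset: "(\<Union>C \<in> components G. Tf C) \<subseteq> fst G"
    using Tf_subset components_subset by blast
  fix u v assume u: "u \<in> (\<Union>C \<in> components G. Tf C)" and v: "v \<in> (\<Union>C \<in> components G. Tf C)"
  then have "v \<in> fst G" using T_subset by blast
  from u obtain C where C: "C \<in> components G" "u \<in> Tf C" by blast
  show "{u, v} \<notin> snd G"
  proof
    assume uv: "{u, v} \<in> snd G"
    have uC: "u \<in> C" using C Tf_subset by blast
    have "adjacent G u v"
      using uC uv components_subset[OF C(1)] \<open>v \<in> fst G\<close> by (auto simp: adjacent_def)
    then have "v \<in> C"
      using component_reach_closed[OF C(1) uC reach_step[OF reach_refl]] \<open>v \<in> fst G\<close> by blast
    then have "v \<in> Tf C" using Union_components_Int[OF C(1)] v by (metis IntI)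
    moreover have "{u, v} \<in> snd (induced G C)" using uC \<open>v \<in> C\<close> uv by simp
    ultimately show False using indep[OF C(1)] C(2) unfolding independent_def by blast
  qed
qed

lemma odd_outside_Union_components:
  assumes fund: "\<And>C. C \<in> components G \<Longrightarrow> fundamental (induced G C) (Tf C)"
  shows "odd_outside G (\<Union>C \<in> components G. Tf C)"
  unfolding odd_outside_def
proof (intro impI ballI)
  define T where "T = (\<Union>C \<in> components G. Tf C)"
  define R where "R = fst G - (T \<union> nbhd G T)"
  fix K assume "K \<in> components (induced G (fst G - (T \<union> nbhd G T)))"
  then obtain u where u: "u \<in> R" and K: "K = {v \<in> R. reach (induced G R) u v}"
    by (auto simp: components_def induced_def R_def)
  define C where "C = {v \<in> fst G. reach G u v}"
  have C_comp: "C \<in> components G" and uC: "u \<in> C"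
    using u component_of_in_components by (auto simp: C_def R_def)
  define RC where "RC = C - (Tf C \<union> nbhd (induced G C) (Tf C))"
  have R_C: "R \<inter> C = RC"
    using Union_components_Int[OF C_comp] nbhd_Union_components_Int[OF C_comp]
      components_subset[OF C_comp]
    by (auto simp: R_def RC_def T_def)
  have "R \<subseteq> fst G" "RC \<subseteq> C" by (auto simp: R_def RC_def)
  have uRC: "u \<in> RC" using R_C u uC by blast
  have K_RC: "K = {v \<in> RC. reach (induced G RC) u v}"
    using component_induced_Int_component[OF C_comp \<open>R \<subseteq> fst G\<close>, of u] uRC u uC R_C K by simp
  have "K \<subseteq> C" using K_RC \<open>RC \<subseteq> C\<close> by blast
  have "K \<in> components (induced (induced G C) RC)"
    using component_of_in_components[of u "induced (induced G C) RC"] uRC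
    by (simp add: K_RC induced_induced \<open>RC \<subseteq> C\<close>)
  moreover have "odd_outside (induced G C) (Tf C)"
    using fund[OF C_comp] by (simp add: fundamental_iff)
  moreover have "Tf C \<union> nbhd (induced G C) (Tf C) \<noteq> C"
    using uRC by (auto simp: RC_def)
  ultimately have "has_odd_cycle (induced (induced G C) K)"
    by (simp add: odd_outside_def RC_def)
  then show "has_odd_cycle (induced G K)" by (simp add: induced_induced \<open>K \<subseteq> C\<close>)
qed

end

lemma edge_cone_iff:
  "{x, y} \<in> snd (cone n E) \<longleftrightarrow>
     {x, y} \<in> E \<or> (x = n + 1 \<and> y \<in> {1..n}) \<or> (y = n + 1 \<and> x \<in> {1..n})"
  by (auto simp: cone_def doubleton_eq_iff)

lemma fst_cone: "fst (cone n E) = {1..n+1}"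
  by (simp add: cone_def)

lemma adjacent_cone_apex:
  "i \<in> {1..n} \<Longrightarrow> adjacent (cone n E) i (n + 1)"
  by (auto simp: adjacent_def cone_def)

lemma connected_cone: "connected_graph (cone n E)"
proof (rule connected_graphI_hub)
  fix x assume "x \<in> fst (cone n E)"
  then have "x = n + 1 \<or> x \<in> {1..n}" by (auto simp: cone_def)
  then show "reach (cone n E) x (n + 1)"
    using reach_step[OF reach_refl adjacent_cone_apex] by auto
qed

lemma nbhd_cone:
  assumes "T \<subseteq> {1..n}" "T \<noteq> {}"
  shows "nbhd (cone n E) T = insert (n + 1) (nbhd ({1..n}, E) T)"
proof -
  obtain t where "t \<in> T" using assms(2) by blast
  then have "{t, n + 1} \<in> snd (cone n E)" using assms(1) edge_cone_iff by blast
  then have apex: "n + 1 \<in> nbhd (cone n E) T"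
    using \<open>t \<in> T\<close> by (auto simp: nbhd_def fst_cone)
  have other: "w \<in> nbhd ({1..n}, E) T \<longleftrightarrow> w \<in> nbhd (cone n E) T" if "w \<noteq> n + 1" for w
  proof -
    have "{u, w} \<in> snd (cone n E) \<longleftrightarrow> {u, w} \<in> E" if "u \<in> T" for u
      using assms(1) \<open>w \<noteq> n + 1\<close> that edge_cone_iff[of u w n E] by auto
    moreover have "w \<in> {1..n} \<longleftrightarrow> w \<in> {1..n+1}" using \<open>w \<noteq> n + 1\<close> by auto
    ultimately show ?thesis by (auto simp: nbhd_def fst_cone)
  qed
  have "n + 1 \<notin> nbhd ({1..n}, E) T" by (simp add: nbhd_def)
  then show ?thesis
    using apex other by (intro set_eqI) (metis insert_iff)
qed

lemma induced_cone:
  "S \<subseteq> {1..n} \<Longrightarrow> induced (cone n E) S = induced ({1..n}, E) S"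
  by (auto simp: induced_def cone_def)

lemma independent_cone:
  "independent ({1..n}, E) T \<Longrightarrow> independent (cone n E) T"
  unfolding independent_def by (auto simp: edge_cone_iff fst_cone)

lemma connected_bip_cone:
  assumes T: "T \<subseteq> {1..n}"
  shows "connected_graph (bip (cone n E) T)"
proof (cases "T = {}")
  case True
  then show ?thesis by (simp add: connected_graph_def bip_def nbhd_def)
next
  case False
  let ?B = "bip (cone n E) T"
  have apex: "n + 1 \<in> nbhd (cone n E) T" using nbhd_cone[OF T False] by simp
  have T_apex: "adjacent ?B t (n + 1)" if "t \<in> T" for t
    using that T apex adjacent_cone_apex[of t n E] by (auto simp: adjacent_def bip_def)
  show ?thesis
  proof (rule connected_graphI_hub)
    fix x assume x: "x \<in> fst ?B"
    show "reach ?B x (n + 1)"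
    proof (cases "x \<in> T")
      case True
      then show ?thesis using reach_step[OF reach_refl T_apex] by blast
    next
      case False
      with x obtain t where "t \<in> T" "{t, x} \<in> snd (cone n E)" "x \<in> nbhd (cone n E) T"
        by (auto simp: bip_def nbhd_def)
      then have "adjacent ?B x t" by (auto simp: adjacent_def bip_def insert_commute)
      then show ?thesis
        using reach_step[OF reach_step[OF reach_refl] T_apex] \<open>t \<in> T\<close> by blast
    qed
  qed
qed

lemma odd_outside_cone:
  assumes T: "T \<subseteq> {1..n}" "T \<noteq> {}" and odd: "odd_outside ({1..n}, E) T"
  shows "odd_outside (cone n E) T"
proof -
  let ?N = "nbhd ({1..n}, E) T"
  have "?N \<subseteq> {1..n}" by (auto simp: nbhd_def)
  then have R: "fst (cone n E) - (T \<union> nbhd (cone n E) T) = {1..n} - (T \<union> ?N)"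
    by (auto simp: nbhd_cone[OF T] fst_cone)
  show ?thesis
    unfolding odd_outside_def R
  proof (intro impI ballI)
    assume "T \<union> nbhd (cone n E) T \<noteq> fst (cone n E)"
    then have "T \<union> ?N \<noteq> {1..n}"
      using R T(1) nbhd_subset[of "cone n E" T] fst_cone[of n E] by auto
    moreover fix K assume "K \<in> components (induced (cone n E) ({1..n} - (T \<union> ?N)))"
    moreover have "K \<subseteq> {1..n}" if "K \<in> components (induced ({1..n}, E) ({1..n} - (T \<union> ?N)))"
      using components_subset[OF that] by auto
    ultimately show "has_odd_cycle (induced (cone n E) K)"
      using odd by (auto simp: odd_outside_def induced_cone)
  qed
qed

lemma odd_outside_cone_empty:
  assumes "has_odd_cycle ({1..n}, E)"
  shows "odd_outside (cone n E) {}"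
  unfolding odd_outside_def
proof (intro impI ballI)
  let ?H = "cone n E"
  fix K assume K: "K \<in> components (induced ?H (fst ?H - ({} \<union> nbhd ?H {})))"
  have "nbhd ?H {} = {}" by (simp add: nbhd_def)
  then have "K \<in> components (induced ?H (fst ?H))" using K by simp
  moreover have "connected_graph (induced ?H (fst ?H))"
    using connected_cone[of n E] by (simp add: connected_graph_def reach_induced_vertices)
  ultimately have "K = fst ?H" by (metis components_connected_graph fst_induced)
  have "has_odd_cycle (induced ({1..n}, E) {1..n})"
    using has_odd_cycle_induced_vertices[OF assms] by simp
  then show "has_odd_cycle (induced ?H K)"
    by (rule has_odd_cycle_mono) (auto simp: \<open>K = fst ?H\<close> fst_cone cone_def)
qed

theorem lemma3p8:
  fixes n :: nat and E :: "nat set set" and Tf :: "nat set \<Rightarrow> nat set"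
  assumes "n \<ge> 1"
    and "simple_graph_on n E"
    and "\<forall>C \<in> components ({1..n}, E). fundamental (induced ({1..n}, E) C) (Tf C)"
  shows "fundamental (cone n E) (\<Union>C \<in> components ({1..n}, E). Tf C)"
proof -
  let ?G = "({1..n}, E)"
  define T where "T = (\<Union>C \<in> components ?G. Tf C)"
  have fund: "\<And>C. C \<in> components ?G \<Longrightarrow> fundamental (induced ?G C) (Tf C)"
    using assms(3) by blast
  then have Tf_subset: "\<And>C. C \<in> components ?G \<Longrightarrow> Tf C \<subseteq> C"
    by (auto simp: fundamental_def independent_def)
  have indep: "independent ?G T"
    using independent_Union_components[OF Tf_subset] fund by (simp add: T_def fundamental_def)
  then have T_subset: "T \<subseteq> {1..n}" by (simp add: independent_def)
  have odd_G: "odd_outside ?G T"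
    using odd_outside_Union_components[OF Tf_subset fund] by (simp add: T_def)
  have "odd_outside (cone n E) T"
  proof (cases "T = {}")
    case True
    then have "has_odd_cycle ?G"
      using odd_outside_empty_imp_has_odd_cycle[of ?G 1] odd_G assms(1) by simp
    then show ?thesis using True odd_outside_cone_empty by simp
  next
    case False
    then show ?thesis using odd_outside_cone T_subset odd_G by blast
  qed
  then show ?thesis
    using independent_cone[OF indep] connected_bip_cone[OF T_subset]
    by (simp add: fundamental_iff T_def)
qed

end
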